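(* Consider the pairing urn model: an urn initially contains $k=k(n)$ red balls and $n-k$ white balls; at each step one red ball is removed and then a second ball is chosen uniformly at random among the balls remaining in the urn and removed; the process continues until no red ball is left. Let $R_i$ be the number of red balls removed during the first $i$ steps and $T:=\inf\{i\ge0:(k-R_i)/(n-2i)<1/2\}$. If $k(n)=X_0n+o_{\mathbb{P}}(n)$ for some $0<X_0<1$, then with high probability $T<n/2$.
   Context: "With high probability" means with probability $1-o(1)$ as $n\to\infty$; $X_n=o_{\mathbb{P}}(n)$ means $X_n/n\to0$ in probability. *)

theory Defs
  imports "HOL-Probability.Probability"
begin

text \<open>A state is (r, w) = (number of red, number of white balls).
 One step: remove one red ball, then remove a ball chosen uniformly at random among
 the r - 1 + w remaining balls (it is red with probability (r-1)/(r-1+w)).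
 Once no red ball is left the process has ended; we keep the state constant then.
 If no ball remains after removing the red ball (r = 1, w = 0) the process ends too.\<close>

definition urn_step :: "nat \<times> nat \<Rightarrow> (nat \<times> nat) pmf" where
  "urn_step s = (case s of (r, w) \<Rightarrow>
     if r = 0 then return_pmf (r, w)
     else if r - 1 + w = 0 then return_pmf (0, w)
     else map_pmf (\<lambda>b. if b then (r - 2, w) else (r - 1, w - 1))
                  (bernoulli_pmf (real (r - 1) / real (r - 1 + w))))"

text \<open>Trajectory of the states s_0, s_1, ..., s_m (a list of length m+1).\<close>

fun urn_traj :: "nat \<Rightarrow> nat \<times> nat \<Rightarrow> (nat \<times> nat) list pmf" where
  "urn_traj 0 s = return_pmf [s]"
| "urn_traj (Suc m) s = bind_pmf (urn_step s) (\<lambda>s'. map_pmf (Cons s) (urn_traj m s'))"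

definition urn_R :: "nat \<Rightarrow> (nat \<times> nat) list \<Rightarrow> nat \<Rightarrow> nat" where
  "urn_R k p i = k - fst (p ! i)"

text \<open>T = inf {i \<ge> 0 : (k - R_i)/(n - 2i) < 1/2}; indices up to n suffice for the
 event T < n/2 (infimum of the empty set is \<infinity>).\<close>

definition urn_T :: "nat \<Rightarrow> nat \<Rightarrow> (nat \<times> nat) list \<Rightarrow> enat" where
  "urn_T n k p = Inf (enat ` {i. i \<le> n \<and>
      (real k - real (urn_R k p i)) / (real n - 2 * real i) < 1 / 2})"

definition urn_run :: "nat \<Rightarrow> nat pmf \<Rightarrow> (nat \<times> (nat \<times> nat) list) pmf" where
  "urn_run n K = bind_pmf K (\<lambda>k. map_pmf (\<lambda>p. (k, p)) (urn_traj n (k, n - k)))"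

end

theory Submission imports Defs "HOL-Real_Asymp.Real_Asymp" begin

text \<open>The ratio (k - R_i)/(n - 2i) is r/(r + w) for the state (r, w) after i steps, so
 T \<ge> n/2 forces the reds to dominate, w \<le> r, in every nonempty state of the run.
 The function dom_bound, equal to 1 at w = 0 and satisfying
 dom_bound r (w + 1) = r/(r + w) dom_bound (r - 1) w while w < r, is superharmonic for the
 urn chain on {w \<le> r}; hence it bounds the probability of domination from (r, w).
 Unrolling the recursion w/2 times gives dom_bound r w \<le> (1 - c/2)^(w/2) as soon as
 w \<ge> c (r + w), and with high probability w = n - k \<ge> (1 - X0) n/2.\<close>

lemma measure_pmf_prob_bind_pmf:
  "measure_pmf.prob (bind_pmf M f) X = (\<integral>x. measure_pmf.prob (f x) X \<partial>M)"
  using measurable_measure_pmf[of f]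
  by (simp add: measure_pmf_bind measure_pmf.measure_bind[where N="count_space UNIV"])

fun dom_bound :: "nat \<Rightarrow> nat \<Rightarrow> real" where
  "dom_bound r 0 = 1"
| "dom_bound r (Suc w) = (if r < Suc w then 0 else real r / real (r + w) * dom_bound (r - 1) w)"

lemma dom_bound_nonneg: "dom_bound r w \<ge> 0"
  by (induction w arbitrary: r) auto

lemma dom_bound_le_1: "dom_bound r w \<le> 1"
proof (induction w arbitrary: r)
  case (Suc w)
  have "real r / real (r + w) * dom_bound (r - 1) w \<le> 1 * 1" if "Suc w \<le> r"
    using that Suc.IH by (intro mult_mono) (auto simp: dom_bound_nonneg)
  then show ?case by (auto simp: not_less)
qed simp

lemma dom_bound_shift:
  "b \<le> a \<Longrightarrow> real a * dom_bound (a - 1) (Suc b) \<le> real (a - b) * dom_bound a b"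
proof (induction b arbitrary: a)
  case 0
  then show ?case by (cases "a < 2") auto
next
  case (Suc b)
  show ?case
  proof (cases "a - 1 < Suc (Suc b)")
    case True
    then show ?thesis using dom_bound_nonneg[of a "Suc b"] by simp
  next
    case False
    have IH: "real (a - 1) * dom_bound (a - 2) (Suc b) \<le> real (a - 1 - b) * dom_bound (a - 1) b"
      using Suc.IH[of "a - 1"] Suc.prems False by (simp add: numeral_2_eq_2)
    have "real a * dom_bound (a - 1) (Suc (Suc b))
        = real a / real (a + b) * (real (a - 1) * dom_bound (a - 2) (Suc b))"
      using False by (simp add: numeral_2_eq_2)
    also have "\<dots> \<le> real a / real (a + b) * (real (a - 1 - b) * dom_bound (a - 1) b)"
      using IH by (intro mult_left_mono) auto
    also have "\<dots> = real (a - Suc b) * dom_bound a (Suc b)"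
      using False by simp
    finally show ?thesis .
  qed
qed

lemma dom_bound_superharmonic:
  assumes "1 \<le> r" "2 \<le> r + w" "w \<le> r"
  shows "real (r - 1) / real (r - 1 + w) * dom_bound (r - 2) w
         + (1 - real (r - 1) / real (r - 1 + w)) * dom_bound (r - 1) (w - 1) \<le> dom_bound r w"
proof (cases w)
  case 0
  then show ?thesis using assms dom_bound_le_1[of "r - 2" 0] by (simp add: divide_le_eq)
next
  case (Suc b)
  have shift: "real (r - 1) * dom_bound (r - 2) w \<le> real (r - w) * dom_bound (r - 1) b"
    using dom_bound_shift[of b "r - 1"] assms Suc by (simp add: numeral_2_eq_2)
  have pos: "real (r - 1 + w) > 0" using assms by simp
  have "1 - real (r - 1) / real (r - 1 + w) = real w / real (r - 1 + w)"
    using pos assms by (simp add: field_simps)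
  moreover have "real (r - 1) / real (r - 1 + w) * dom_bound (r - 2) w
                   + real w / real (r - 1 + w) * dom_bound (r - 1) b
      = (real (r - 1) * dom_bound (r - 2) w + real w * dom_bound (r - 1) b) / real (r - 1 + w)"
    by (simp only: add_divide_distrib times_divide_eq_left)
  moreover have "\<dots> \<le> (real (r - w) * dom_bound (r - 1) b + real w * dom_bound (r - 1) b)
                       / real (r - 1 + w)"
    using shift pos by (intro divide_right_mono) auto
  moreover have "\<dots> = dom_bound r w"
    using Suc assms by (simp add: field_simps)
  ultimately show ?thesis using Suc by simp
qed

lemma dom_bound_le_power: "m \<le> w \<Longrightarrow> dom_bound r w \<le> (real r / real (r + w - m)) ^ m"
proof (induction m arbitrary: r w)
  case 0
  then show ?case by (simp add: dom_bound_le_1)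
next
  case (Suc m)
  then obtain w' where w: "w = Suc w'" and m: "m \<le> w'" by (cases w) auto
  show ?case
  proof (cases "r < w")
    case False
    have ratio_mono: "real (r - 1) / real (r - 1 + w' - m) \<le> real r / real (r + w' - m)"
    proof (cases "r - 1 + w' - m = 0")
      case False
      have "real (r - 1) * real (r + w' - m) \<le> real r * real (r - 1 + w' - m)"
        using \<open>\<not> r < w\<close> w m by (simp add: algebra_simps)
      then show ?thesis using False by (simp add: divide_simps)
    qed simp
    have "dom_bound r w = real r / real (r + w') * dom_bound (r - 1) w'"
      using False w by simp
    also have "\<dots> \<le> real r / real (r + w' - m) * (real r / real (r + w' - m)) ^ m"
    proof (rule mult_mono)
      show "real r / real (r + w') \<le> real r / real (r + w' - m)"
        using False w m by (intro divide_left_mono) auto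
      have "(real (r - 1) / real (r - 1 + w' - m)) ^ m \<le> (real r / real (r + w' - m)) ^ m"
        using ratio_mono by (intro power_mono) auto
      then show "dom_bound (r - 1) w' \<le> (real r / real (r + w' - m)) ^ m"
        using Suc.IH[OF m, of "r - 1"] by linarith
    qed (auto simp: dom_bound_nonneg)
    also have "\<dots> = (real r / real (r + w - Suc m)) ^ Suc m"
      using w by simp
    finally show ?thesis .
  qed (use w in simp)
qed

lemma dom_bound_le_exp:
  assumes c: "0 < c" "c \<le> 1" and w: "c * real (r + w) \<le> real w"
  shows "dom_bound r w \<le> exp (- (c / 2) * (c * real (r + w) / 2 - 1))"
proof -
  define m where "m = w div 2"
  have m: "real m \<ge> real w / 2 - 1 / 2" "2 * real m \<le> real w"
    unfolding m_def by linarith+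
  have ratio: "real r / real (r + w - m) \<le> 1 - c / 2"
  proof (cases "r + w - m = 0")
    case False
    have "real r \<le> real r + real w - real m - c * real (r + w) / 2"
      using m w by linarith
    also have "\<dots> \<le> (1 - c / 2) * real (r + w - m)"
      using c by (simp add: m_def algebra_simps)
    finally show ?thesis using False by (simp add: divide_simps)
  qed (use c in simp)
  have "dom_bound r w \<le> (real r / real (r + w - m)) ^ m"
    by (rule dom_bound_le_power) (simp add: m_def)
  also have "\<dots> \<le> exp (- (c / 2)) ^ m"
    using ratio exp_ge_add_one_self[of "- (c / 2)"] by (intro power_mono) auto
  also have "\<dots> = exp (- (c / 2) * real m)"
    by (simp add: exp_of_nat_mult[symmetric] mult.commute)
  also have "\<dots> \<le> exp (- (c / 2) * (c * real (r + w) / 2 - 1))"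
    using m w c by (simp add: mult_left_mono)
  finally show ?thesis .
qed

definition reds_dominate :: "(nat \<times> nat) list \<Rightarrow> bool" where
  "reds_dominate p \<longleftrightarrow> (\<forall>(r, w) \<in> set p. r + w > 0 \<longrightarrow> w \<le> r)"

lemma reds_dominate_Cons:
  "reds_dominate ((r, w) # p) \<longleftrightarrow> (r + w > 0 \<longrightarrow> w \<le> r) \<and> reds_dominate p"
  by (simp add: reds_dominate_def)

text \<open>The horizon m must suffice to empty the urn: short runs are likely to stay dominated.\<close>

lemma prob_reds_dominate_le:
  "r + w \<le> 2 * m + 1 \<Longrightarrow>
   measure_pmf.prob (urn_traj m (r, w)) {p. reds_dominate p} \<le> dom_bound r w"
proof (induction m arbitrary: r w)
  case 0
  then show ?case
    by (cases "w = 0") (auto simp: reds_dominate_def measure_pmf_zero_iff dom_bound_nonneg)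
next
  case (Suc m)
  have bind: "measure_pmf.prob (urn_traj (Suc m) (r, w)) {p. reds_dominate p}
     = (\<integral>s'. measure_pmf.prob (urn_traj m s') (Cons (r, w) -` {p. reds_dominate p}) \<partial>urn_step (r, w))"
    by (simp add: measure_pmf_prob_bind_pmf)
  consider "r + w > 0" "w > r" | "w = 0" | "1 \<le> r" "2 \<le> r + w" "0 < w" "w \<le> r"
    by linarith
  then show ?case
  proof cases
    case 1
    then have "Cons (r, w) -` {p. reds_dominate p} = {}"
      by (auto simp: reds_dominate_Cons)
    then show ?thesis using bind by (simp add: dom_bound_nonneg)
  next
    case 3
    define q where "q = real (r - 1) / real (r - 1 + w)"
    have q: "0 \<le> q" "q \<le> 1" using 3 by (auto simp: q_def)
    have pre: "Cons (r, w) -` {p. reds_dominate p} = {p. reds_dominate p}"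
      using 3 by (auto simp: reds_dominate_Cons)
    have step: "urn_step (r, w)
        = map_pmf (\<lambda>b. if b then (r - 2, w) else (r - 1, w - 1)) (bernoulli_pmf q)"
      using 3 by (simp add: urn_step_def q_def)
    have "measure_pmf.prob (urn_traj (Suc m) (r, w)) {p. reds_dominate p}
        = measure_pmf.prob (urn_traj m (r - 2, w)) {p. reds_dominate p} * q
          + measure_pmf.prob (urn_traj m (r - 1, w - 1)) {p. reds_dominate p} * (1 - q)"
      unfolding bind pre step using q by simp
    also have "\<dots> \<le> dom_bound (r - 2) w * q + dom_bound (r - 1) (w - 1) * (1 - q)"
      using Suc.IH[of "r - 2" w] Suc.IH[of "r - 1" "w - 1"] Suc.prems 3 q
      by (intro add_mono mult_right_mono) auto
    also have "\<dots> \<le> dom_bound r w"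
      using dom_bound_superharmonic[of r w] 3 unfolding q_def by (simp add: mult.commute)
    finally show ?thesis .
  qed simp
qed

lemma urn_step_cases:
  assumes "s' \<in> set_pmf (urn_step (r, w))"
  obtains "r = 0 \<or> r - 1 + w = 0" "s' = (0, w)"
    | "r \<ge> 2" "r - 1 + w > 0" "s' = (r - 2, w)"
    | "r \<ge> 1" "w \<ge> 1" "s' = (r - 1, w - 1)"
proof (cases "r = 0 \<or> r - 1 + w = 0")
  case True
  then have "s' = (0, w)" using assms by (auto simp: urn_step_def split: if_splits)
  then show ?thesis using True that(1) by blast
next
  case running: False
  define q where "q = real (r - 1) / real (r - 1 + w)"
  have q: "0 \<le> q" "q \<le> 1" using running by (auto simp: q_def)
  have "urn_step (r, w) = map_pmf (\<lambda>b. if b then (r - 2, w) else (r - 1, w - 1)) (bernoulli_pmf q)"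
    using running by (auto simp: urn_step_def q_def)
  then obtain b where b: "b \<in> set_pmf (bernoulli_pmf q)"
    and s': "s' = (if b then (r - 2, w) else (r - 1, w - 1))"
    using assms by auto
  show ?thesis
  proof (cases b)
    case True
    then have "q \<noteq> 0" using b q by (auto simp: set_pmf_iff)
    then show ?thesis using that(2) s' True running by (auto simp: q_def)
  next
    case False
    then have "q \<noteq> 1" using b q by (auto simp: set_pmf_iff)
    then show ?thesis using that(3) s' False running by (auto simp: q_def)
  qed
qed

lemma length_urn_traj: "p \<in> set_pmf (urn_traj m s) \<Longrightarrow> length p = Suc m"
  by (induction m arbitrary: s p) auto

lemma urn_traj_fst_le: "p \<in> set_pmf (urn_traj m (r, w)) \<Longrightarrow> x \<in> set p \<Longrightarrow> fst x \<le> r"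
proof (induction m arbitrary: r w p)
  case (Suc m)
  then obtain r' w' p' where s': "(r', w') \<in> set_pmf (urn_step (r, w))"
    and p': "p' \<in> set_pmf (urn_traj m (r', w'))" and p: "p = (r, w) # p'"
    by auto
  have "r' \<le> r" using s' by (rule urn_step_cases) auto
  then show ?case using Suc.IH[OF p'] Suc.prems(2) p by auto
qed simp

text \<open>While the urn is nonempty the state after j steps has r + w = n - 2j, so
 2r + 2j < n says that the whites lead there.\<close>

lemma urn_traj_reds_dominate_or_whites_lead:
  "p \<in> set_pmf (urn_traj m (r, w)) \<Longrightarrow>
   reds_dominate p \<or> (\<exists>j\<le>m. 2 * j < r + w \<and> 2 * fst (p ! j) + 2 * j < r + w)"
proof (induction m arbitrary: r w p)
  case 0
  then show ?case by (auto simp: reds_dominate_def)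
next
  case (Suc m)
  obtain s' p' where s': "s' \<in> set_pmf (urn_step (r, w))"
    and p': "p' \<in> set_pmf (urn_traj m s')" and p: "p = (r, w) # p'"
    using Suc.prems by auto
  show ?case
  proof (cases "r + w > 0 \<longrightarrow> w \<le> r")
    case False
    then show ?thesis using p by (intro disjI2 exI[of _ 0]) auto
  next
    case dom: True
    obtain r' w' where s'_eq: "s' = (r', w')" by (cases s')
    have two_removed: ?thesis if "r' + w' + 2 = r + w"
      using Suc.IH[OF p'[unfolded s'_eq]]
    proof
      assume "reds_dominate p'"
      then show ?thesis using p dom by (simp add: reds_dominate_Cons)
    next
      assume "\<exists>j\<le>m. 2 * j < r' + w' \<and> 2 * fst (p' ! j) + 2 * j < r' + w'"
      then obtain j where "j \<le> m" "2 * j < r' + w'" "2 * fst (p' ! j) + 2 * j < r' + w'"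
        by blast
      then show ?thesis using that p by (intro disjI2 exI[of _ "Suc j"]) auto
    qed
    from s' show ?thesis unfolding s'_eq
    proof (cases rule: urn_step_cases)
      case 1
      then have "reds_dominate p'" using Suc.IH[OF p'[unfolded s'_eq]] dom by auto
      then show ?thesis using p dom by (simp add: reds_dominate_Cons)
    qed (rule two_removed, simp)+
  qed
qed

definition urn_T_lt_half :: "nat \<Rightarrow> nat \<Rightarrow> (nat \<times> nat) list \<Rightarrow> bool" where
  "urn_T_lt_half n k p \<longleftrightarrow> (case urn_T n k p of enat i \<Rightarrow> real i < real n / 2 | \<infinity> \<Rightarrow> False)"

lemma urn_T_lt_half_if_not_reds_dominate:
  assumes k: "k \<le> n" and p: "p \<in> set_pmf (urn_traj n (k, n - k))" and "\<not> reds_dominate p"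
  shows "urn_T_lt_half n k p"
proof -
  obtain j where j: "j \<le> n" "2 * j < n" "2 * fst (p ! j) + 2 * j < n"
    using urn_traj_reds_dominate_or_whites_lead[OF p] assms by auto
  have "fst (p ! j) \<le> k"
    using urn_traj_fst_le[OF p, of "p ! j"] length_urn_traj[OF p] j by simp
  then have "real k - real (urn_R k p j) = real (fst (p ! j))"
    by (simp add: urn_R_def)
  moreover have "real (fst (p ! j)) / (real n - 2 * real j) < 1 / 2"
    using j by (simp add: divide_less_eq)
  ultimately have "urn_T n k p \<le> enat j"
    unfolding urn_T_def using j by (intro Inf_lower) auto
  then show ?thesis
    using j by (cases "urn_T n k p") (auto simp: urn_T_lt_half_def)
qed

lemma prob_not_urn_T_lt_half_le:
  assumes "k \<le> n"
  shows "measure_pmf.prob (urn_traj n (k, n - k)) {p. \<not> urn_T_lt_half n k p} \<le> dom_bound k (n - k)"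
proof -
  let ?M = "urn_traj n (k, n - k)"
  have "measure_pmf.prob ?M {p. \<not> urn_T_lt_half n k p}
      = measure_pmf.prob ?M ({p. \<not> urn_T_lt_half n k p} \<inter> set_pmf ?M)"
    by (simp add: measure_Int_set_pmf)
  also have "\<dots> \<le> measure_pmf.prob ?M {p. reds_dominate p}"
    using urn_T_lt_half_if_not_reds_dominate[OF assms]
    by (intro measure_pmf.finite_measure_mono) auto
  also have "\<dots> \<le> dom_bound k (n - k)"
    using prob_reds_dominate_le[of k "n - k" n] assms by simp
  finally show ?thesis .
qed

lemma prob_urn_run_le:
  assumes "b \<ge> 0"
    and "\<And>k. k \<in> set_pmf K \<Longrightarrow> k \<notin> A \<Longrightarrow>
           measure_pmf.prob (urn_traj n (k, n - k)) {p. (k, p) \<in> E} \<le> b"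
  shows "measure_pmf.prob (urn_run n K) E \<le> measure_pmf.prob K A + b"
proof -
  let ?f = "\<lambda>k. measure_pmf.prob (urn_traj n (k, n - k)) {p. (k, p) \<in> E}"
  have int_A: "integrable K (indicator A :: nat \<Rightarrow> real)"
    by (intro integrable_real_indicator) (auto simp: less_top[symmetric])
  have "measure_pmf.prob (urn_run n K) E = (\<integral>k. ?f k \<partial>K)"
    by (simp add: urn_run_def measure_pmf_prob_bind_pmf vimage_def)
  also have "\<dots> \<le> (\<integral>k. indicator A k + b \<partial>K)"
  proof (rule integral_mono_AE)
    show "integrable K ?f"
      by (rule measure_pmf.integrable_const_bound[where B=1]) auto
    show "AE k in K. ?f k \<le> indicator A k + b"
      using assms by (auto simp: AE_measure_pmf_iff indicator_def add_increasing2)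
  qed (use int_A in simp)
  also have "\<dots> = measure_pmf.prob K A + b"
    using int_A by simp
  finally show ?thesis .
qed

lemma prob_urn_T_lt_half_urn_run_ge:
  assumes c: "0 < c" "c \<le> 1" and K: "set_pmf K \<subseteq> {..n}"
  shows "1 - measure_pmf.prob K {k. real k > (1 - c) * real n} - exp (- (c / 2) * (c * real n / 2 - 1))
         \<le> measure_pmf.prob (urn_run n K) {(k, p). urn_T_lt_half n k p}"
proof -
  let ?E = "{(k, p). \<not> urn_T_lt_half n k p}"
  have "measure_pmf.prob (urn_run n K) ?E
        \<le> measure_pmf.prob K {k. real k > (1 - c) * real n} + exp (- (c / 2) * (c * real n / 2 - 1))"
  proof (rule prob_urn_run_le)
    fix k assume "k \<in> set_pmf K" "k \<notin> {k. real k > (1 - c) * real n}"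
    then have k: "k \<le> n" "c * real (k + (n - k)) \<le> real (n - k)"
      using K by (auto simp: algebra_simps)
    have "measure_pmf.prob (urn_traj n (k, n - k)) {p. (k, p) \<in> ?E} \<le> dom_bound k (n - k)"
      using prob_not_urn_T_lt_half_le[OF k(1)] by simp
    also have "\<dots> \<le> exp (- (c / 2) * (c * real n / 2 - 1))"
      using dom_bound_le_exp[OF c k(2)] k(1) by simp
    finally show "measure_pmf.prob (urn_traj n (k, n - k)) {p. (k, p) \<in> ?E}
      \<le> exp (- (c / 2) * (c * real n / 2 - 1))" .
  qed simp
  moreover have "UNIV - ?E = {(k, p). urn_T_lt_half n k p}"
    by auto
  then have "measure_pmf.prob (urn_run n K) {(k, p). urn_T_lt_half n k p}
      = 1 - measure_pmf.prob (urn_run n K) ?E"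
    using measure_pmf.prob_compl[of ?E "urn_run n K"] by simp
  ultimately show ?thesis by linarith
qed

theorem lemma6:
  fixes K :: "nat \<Rightarrow> nat pmf" and X0 :: real
  assumes "0 < X0" and "X0 < 1"
    and "\<And>n. set_pmf (K n) \<subseteq> {..n}"
    and "\<And>\<epsilon>. \<epsilon> > 0 \<Longrightarrow>
           (\<lambda>n. measure_pmf.prob (K n) {k. \<bar>real k - X0 * real n\<bar> > \<epsilon> * real n})
             \<longlonglongrightarrow> 0"
  shows "(\<lambda>n. measure_pmf.prob (urn_run n (K n))
            {(k, p). case urn_T n k p of enat i \<Rightarrow> real i < real n / 2 | \<infinity> \<Rightarrow> False})
           \<longlonglongrightarrow> 1"
proof -
  define c where "c = (1 - X0) / 2"
  have c: "0 < c" "c \<le> 1" using assms(1,2) by (auto simp: c_def)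
  define a where "a n = measure_pmf.prob (K n) {k. \<bar>real k - X0 * real n\<bar> > c * real n}" for n
  define b where "b n = exp (- (c / 2) * (c * real n / 2 - 1))" for n :: nat
  have many_reds: "measure_pmf.prob (K n) {k. real k > (1 - c) * real n} \<le> a n" for n
  proof -
    have "c * real n < \<bar>real k - X0 * real n\<bar>" if "(1 - c) * real n < real k" for k
      using that abs_ge_self[of "real k - X0 * real n"] by (simp add: c_def algebra_simps) argo
    then show ?thesis
      unfolding a_def by (intro measure_pmf.finite_measure_mono) auto
  qed
  have lower:
    "1 - a n - b n \<le> measure_pmf.prob (urn_run n (K n)) {(k, p). urn_T_lt_half n k p}" for n
    using prob_urn_T_lt_half_urn_run_ge[OF c assms(3), of n] many_reds[of n]
    unfolding b_def by linarith
  have "a \<longlonglongrightarrow> 0"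
    unfolding a_def using assms(4)[OF c(1)] .
  moreover have "b \<longlonglongrightarrow> 0"
    unfolding b_def using c(1) by real_asymp
  ultimately have "(\<lambda>n. 1 - a n - b n) \<longlonglongrightarrow> 1 - 0 - 0"
    by (intro tendsto_diff tendsto_const)
  then have lim_lower: "(\<lambda>n. 1 - a n - b n) \<longlonglongrightarrow> 1"
    by simp
  have "(\<lambda>n. measure_pmf.prob (urn_run n (K n)) {(k, p). urn_T_lt_half n k p}) \<longlonglongrightarrow> 1"
    by (rule tendsto_sandwich[OF _ _ lim_lower tendsto_const]) (simp_all add: lower)
  then show ?thesis by (simp add: urn_T_lt_half_def)
qed

end
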